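(* Let $n$ be even, $c>0$, $|\lambda|<c$. Let $P_0^{(n)}$ be the Erdős–Rényi law on graphs on $\{1,\dots,n\}$ with independent edges of probability $p_n=c/n$, and $P_1^{(n)}$ the two-block stochastic block model with two fixed equally sized blocks of size $n/2$, independent edges with probability $p_n^{\mathrm{in}}=(c+\lambda)/n$ within blocks and $p_n^{\mathrm{out}}=(c-\lambda)/n$ between blocks, so that there are $N_n^{\mathrm{in}}=n^2/4-n/2$ within-block and $N_n^{\mathrm{out}}=n^2/4$ between-block pairs. Let \[\mathcal C_n:=\sup_{0\le t\le1}-\log\sum_A P_0^{(n)}(A)^{1-t}P_1^{(n)}(A)^t\] be the Chernoff information (the sum running over adjacency matrices $A$). Then \[\frac{\mathcal C_n}{n}\to J(\lambda):=\sup_{0\le t\le1}\frac14\Big[2c-c^{1-t}\big((c+\lambda)^t+(c-\lambda)^t\big)\Big].\] Moreover, as $\lambda\to0$, $J(\lambda)=\frac{\lambda^2}{16c}+O(\lambda^4/c^3)$; in particular $\mathcal C_n=J(\lambda)n+o(n)$ and $J(\lambda)=\frac14 I(\lambda)+O(\lambda^4/c^3)$, where $I(\lambda):=\frac14\big[(c+\lambda)\log\frac{c+\lambda}{c}+(c-\lambda)\log\frac{c-\lambda}{c}\big]$. *)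

theory Defs
  imports Complex_Main "HOL-Library.Landau_Symbols"
begin

text \<open>Vertex pairs of a graph on {1..n}; an unordered pair is encoded as (i,j) with i<j.
  A (simple) graph on {1..n} is a set of such pairs (its edge set), equivalently its adjacency matrix.\<close>
definition vpairs :: "nat \<Rightarrow> (nat \<times> nat) set" where
  "vpairs n = {(i,j). 1 \<le> i \<and> i < j \<and> j \<le> n}"

definition same_block :: "nat \<Rightarrow> nat \<Rightarrow> nat \<Rightarrow> bool" where
  "same_block n i j \<longleftrightarrow> (i \<le> n div 2 \<longleftrightarrow> j \<le> n div 2)"

definition P0 :: "real \<Rightarrow> nat \<Rightarrow> (nat \<times> nat) set \<Rightarrow> real" where
  "P0 c n A = (\<Prod>e\<in>vpairs n. if e \<in> A then c / real n else 1 - c / real n)"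

definition P1 :: "real \<Rightarrow> real \<Rightarrow> nat \<Rightarrow> (nat \<times> nat) set \<Rightarrow> real" where
  "P1 c lam n A = (\<Prod>e\<in>vpairs n.
      let p = (if same_block n (fst e) (snd e) then (c + lam) / real n else (c - lam) / real n)
      in if e \<in> A then p else 1 - p)"

definition chernoff :: "real \<Rightarrow> real \<Rightarrow> nat \<Rightarrow> real" where
  "chernoff c lam n = (SUP t\<in>{0..1::real}.
      - ln (\<Sum>A\<in>Pow (vpairs n). P0 c n A powr (1 - t) * P1 c lam n A powr t))"

definition Jfun :: "real \<Rightarrow> real \<Rightarrow> real" where
  "Jfun c lam = (SUP t\<in>{0..1::real}.
      (1/4) * (2 * c - c powr (1 - t) * ((c + lam) powr t + (c - lam) powr t)))"

definition Ifun :: "real \<Rightarrow> real \<Rightarrow> real" where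
  "Ifun c lam = (1/4) * ((c + lam) * ln ((c + lam) / c) + (c - lam) * ln ((c - lam) / c))"

end

theory Submission
  imports Defs "HOL-Analysis.Analysis"
begin

text \<open>The sum in the Chernoff information factorises over vertex pairs, so its negative
  logarithm is a sum of negative logarithms of Chernoff coefficients of Bernoulli laws.
  For edge probabilities c/n and a/n such a term is ((1-t) c + t a - c^(1-t) a^t) / n up to
  O(1/n^2), uniformly in t. Summing over the n^2/4 - n/2 within-block pairs (a = c + \<lambda>)
  and the n^2/4 between-block pairs (a = c - \<lambda>) gives n times the function maximised in
  J(\<lambda>) up to O(1), and taking suprema over t gives C_n = J(\<lambda>) n + O(1).
  The expansions in \<lambda> come from fourth-order Taylor bounds for (1+x)^t + (1-x)^t and
  (1+x) ln(1+x) + (1-x) ln(1-x) at x = \<lambda>/c: the maximised function is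
  t(1-t) \<lambda>^2/(4c) + O(\<lambda>^4/c^3), whose maximum is at t = 1/2 to leading order.\<close>

lemma Maclaurin_remainder_bound:
  fixes f :: "real \<Rightarrow> real" and x M :: real
  assumes "diff 0 = f"
    and "\<forall>m t. m < n \<and> \<bar>t\<bar> \<le> \<bar>x\<bar> \<longrightarrow> DERIV (diff m) t :> diff (Suc m) t"
    and "\<And>t. \<bar>t\<bar> \<le> \<bar>x\<bar> \<Longrightarrow> \<bar>diff n t\<bar> \<le> M"
  shows "\<bar>f x - (\<Sum>m<n. diff m 0 / fact m * x ^ m)\<bar> \<le> M / fact n * \<bar>x\<bar> ^ n"
proof -
  obtain t where t: "\<bar>t\<bar> \<le> \<bar>x\<bar>"
    and f_eq: "f x = (\<Sum>m<n. diff m 0 / fact m * x ^ m) + diff n t / fact n * x ^ n"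
    using Maclaurin_bi_le[OF assms(1,2)] by blast
  have "\<bar>f x - (\<Sum>m<n. diff m 0 / fact m * x ^ m)\<bar> = \<bar>diff n t\<bar> / fact n * \<bar>x\<bar> ^ n"
    by (simp add: f_eq abs_mult power_abs)
  also have "\<dots> \<le> M / fact n * \<bar>x\<bar> ^ n"
    using assms(3)[OF t] by (intro mult_right_mono divide_right_mono) auto
  finally show ?thesis .
qed

lemma DERIV_powr_one_plus_minus:
  fixes a e s :: real
  assumes "\<bar>s\<bar> < 1"
  shows "DERIV (\<lambda>y. (1 + y) powr a + e * (1 - y) powr a) s :>
    a * (1 + s) powr (a - 1) - e * a * (1 - s) powr (a - 1)"
  using assms by (auto intro!: derivative_eq_intros simp: algebra_simps)

lemma powr_one_plus_minus_taylor:
  fixes t x :: real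
  assumes t: "0 \<le> t" "t \<le> 1" and x: "\<bar>x\<bar> \<le> 1/2"
  shows "\<bar>(1 + x) powr t + (1 - x) powr t - 2 - t * (t - 1) * x^2\<bar> \<le> 8 * x^4"
proof -
  define D where "D k y = (\<Prod>i<k. t - real i) *
      ((1 + y) powr (t - real k) + (-1) ^ k * (1 - y) powr (t - real k))" for k y
  have deriv: "\<forall>m s. m < 4 \<and> \<bar>s\<bar> \<le> \<bar>x\<bar> \<longrightarrow> DERIV (D m) s :> D (Suc m) s"
  proof (intro allI impI)
    fix m :: nat and s :: real assume "m < 4 \<and> \<bar>s\<bar> \<le> \<bar>x\<bar>"
    then have "\<bar>s\<bar> < 1" using x by linarith
    then have "DERIV (D m) s :> (\<Prod>i<m. t - real i) * ((t - real m) * (1 + s) powr (t - real m - 1)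
        - (-1) ^ m * (t - real m) * (1 - s) powr (t - real m - 1))"
      unfolding D_def by (intro DERIV_cmult DERIV_powr_one_plus_minus)
    then show "DERIV (D m) s :> D (Suc m) s"
      by (simp add: D_def algebra_simps diff_diff_add)
  qed
  have powr_le: "y powr (t - 4) \<le> 16" if "1/2 \<le> y" for y :: real
  proof -
    have "y powr (t - 4) \<le> (1/2) powr (t - 4)"
      using that t by (intro powr_mono2') auto
    also have "\<dots> \<le> (1/2) powr (-4)"
      using t by (intro powr_mono') auto
    finally show ?thesis
      by (simp add: powr_minus power_one_over)
  qed
  have coeff: "\<bar>t * (t - 1) * (t - 2) * (t - 3)\<bar> \<le> 6"
  proof -
    have "t * (1 - t) \<le> 1"
      using t by (auto intro: mult_le_one)
    moreover have "(2 - t) * (3 - t) \<le> 2 * 3"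
      using t by (intro mult_mono) auto
    ultimately have "(t * (1 - t)) * ((2 - t) * (3 - t)) \<le> 1 * 6"
      using t by (intro mult_mono) auto
    moreover have "0 \<le> (t * (1 - t)) * ((2 - t) * (3 - t))"
      using t by simp
    ultimately show ?thesis
      by (simp add: abs_le_iff algebra_simps)
  qed
  have "\<bar>D 4 s\<bar> \<le> 6 * 32" if "\<bar>s\<bar> \<le> \<bar>x\<bar>" for s
  proof -
    have "D 4 s = t * (t - 1) * (t - 2) * (t - 3) * ((1 + s) powr (t - 4) + (1 - s) powr (t - 4))"
      by (simp add: D_def numeral_eq_Suc algebra_simps)
    then have "\<bar>D 4 s\<bar> = \<bar>t * (t - 1) * (t - 2) * (t - 3)\<bar> * \<bar>(1 + s) powr (t - 4) + (1 - s) powr (t - 4)\<bar>"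
      by (simp only: abs_mult)
    also have "\<dots> \<le> 6 * 32"
      using coeff powr_le[of "1 + s"] powr_le[of "1 - s"] that x by (intro mult_mono) (auto simp: abs_le_iff)
    finally show ?thesis .
  qed
  from Maclaurin_remainder_bound[of D _ 4, OF refl deriv this]
  show ?thesis
    by (simp add: D_def numeral_eq_Suc fact_numeral eval_nat_numeral power_abs)
qed

lemma xlnx_one_plus_minus_taylor:
  fixes x :: real
  assumes x: "\<bar>x\<bar> \<le> 1/2"
  shows "\<bar>(1 + x) * ln (1 + x) + (1 - x) * ln (1 - x) - x^2\<bar> \<le> 2 * x^4"
proof -
  define D :: "nat \<Rightarrow> real \<Rightarrow> real" where "D k y = (case k of
      0 \<Rightarrow> (1 + y) * ln (1 + y) + (1 - y) * ln (1 - y)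
    | Suc 0 \<Rightarrow> ln (1 + y) - ln (1 - y)
    | Suc (Suc 0) \<Rightarrow> 1 / (1 + y) + 1 / (1 - y)
    | Suc (Suc (Suc 0)) \<Rightarrow> - 1 / (1 + y)^2 + 1 / (1 - y)^2
    | _ \<Rightarrow> 2 / (1 + y)^3 + 2 / (1 - y)^3)" for k y
  have deriv: "\<forall>m s. m < 4 \<and> \<bar>s\<bar> \<le> \<bar>x\<bar> \<longrightarrow> DERIV (D m) s :> D (Suc m) s"
  proof (intro allI impI)
    fix m :: nat and s :: real assume "m < 4 \<and> \<bar>s\<bar> \<le> \<bar>x\<bar>"
    then have m: "m = 0 \<or> m = 1 \<or> m = 2 \<or> m = 3" and s: "1 + s > 0" "1 - s > 0"
      using x by auto
    have "DERIV (\<lambda>y. (1 + y) * ln (1 + y) + (1 - y) * ln (1 - y)) s :> ln (1 + s) - ln (1 - s)"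
    proof -
      have "DERIV (\<lambda>y. (1 + y) * ln (1 + y)) s :> ln (1 + s) + 1"
        "DERIV (\<lambda>y. (1 - y) * ln (1 - y)) s :> - ln (1 - s) - 1"
        using s by (auto intro!: derivative_eq_intros simp: field_simps)
      from DERIV_add[OF this] show ?thesis by simp
    qed
    moreover have "DERIV (\<lambda>y. - 1 / (1 + y)^2 + 1 / (1 - y)^2) s :> 2 / (1 + s)^3 + 2 / (1 - s)^3"
    proof -
      have "DERIV (\<lambda>y. - 1 / (1 + y)^2) s :> 2 / (1 + s)^3"
        "DERIV (\<lambda>y. 1 / (1 - y)^2) s :> 2 / (1 - s)^3"
        using s by (auto intro!: derivative_eq_intros simp: divide_simps eval_nat_numeral)
      from DERIV_add[OF this] show ?thesis .
    qed
    moreover have "DERIV (\<lambda>y. ln (1 + y) - ln (1 - y)) s :> 1 / (1 + s) + 1 / (1 - s)"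
      "DERIV (\<lambda>y. 1 / (1 + y) + 1 / (1 - y)) s :> - 1 / (1 + s)^2 + 1 / (1 - s)^2"
      using s by (auto intro!: derivative_eq_intros simp: field_simps power2_eq_square)
    ultimately show "DERIV (D m) s :> D (Suc m) s"
      using m unfolding D_def by (auto simp: numeral_eq_Suc)
  qed
  have "\<bar>D 4 s\<bar> \<le> 32" if "\<bar>s\<bar> \<le> \<bar>x\<bar>" for s
  proof -
    have "2 / y^3 \<le> 16" if "1/2 \<le> y" for y :: real
    proof -
      have "(1/2) ^ 3 \<le> y ^ 3"
        using that by (intro power_mono) auto
      then show ?thesis
        using that by (simp add: field_simps)
    qed
    moreover have "1/2 \<le> 1 + s" "1/2 \<le> 1 - s"
      using that x by (auto simp: abs_le_iff)
    ultimately show ?thesis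
      by (simp add: D_def numeral_eq_Suc abs_le_iff) (smt (verit) zero_le_divide_iff zero_le_power)
  qed
  from Maclaurin_remainder_bound[of D _ 4, OF refl deriv this]
  have "\<bar>(1 + x) * ln (1 + x) + (1 - x) * ln (1 - x) - x^2\<bar> \<le> 32 / 24 * x^4"
    by (simp add: D_def numeral_eq_Suc fact_numeral eval_nat_numeral power_abs)
  moreover have "0 \<le> x^4"
    by simp
  ultimately show ?thesis
    by linarith
qed

lemma Jfun_integrand_scaled:
  fixes c l t :: real
  assumes c: "c > 0" and l: "\<bar>l\<bar> \<le> c"
  shows "(1/4) * (2 * c - c powr (1 - t) * ((c + l) powr t + (c - l) powr t))
    = (c/4) * (2 - ((1 + l/c) powr t + (1 - l/c) powr t))"
proof -
  have "c + l = c * (1 + l/c)" "c - l = c * (1 - l/c)" "0 \<le> 1 + l/c" "0 \<le> 1 - l/c"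
    using c l by (auto simp: field_simps abs_le_iff)
  then have "(c + l) powr t = c powr t * (1 + l/c) powr t" "(c - l) powr t = c powr t * (1 - l/c) powr t"
    using c by (simp_all add: powr_mult)
  then have "c powr (1 - t) * ((c + l) powr t + (c - l) powr t)
      = (c powr (1 - t) * c powr t) * ((1 + l/c) powr t + (1 - l/c) powr t)"
    by (simp add: algebra_simps)
  also have "c powr (1 - t) * c powr t = c"
    using c by (simp flip: powr_add)
  finally show ?thesis
    by (simp add: algebra_simps)
qed

lemma mult_one_minus_le_quarter: "(t::real) * (1 - t) \<le> 1/4"
  using zero_le_power2[of "t - 1/2"] by (simp add: power2_eq_square algebra_simps)

lemma Jfun_quadratic_approx:
  fixes c l :: real
  assumes c: "c > 0" and l: "\<bar>l\<bar> \<le> c/2"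
  shows "\<bar>Jfun c l - l^2 / (16 * c)\<bar> \<le> 2 * (l^4 / c^3)"
proof -
  define x where "x = l / c"
  have x: "\<bar>x\<bar> \<le> 1/2"
    using c l by (simp add: x_def abs_divide field_simps)
  define g where "g t = (1/4) * (2 * c - c powr (1 - t) * ((c + l) powr t + (c - l) powr t))" for t
  have g_eq: "g t = (c/4) * (2 - ((1 + x) powr t + (1 - x) powr t))" for t
    unfolding g_def x_def using c l by (intro Jfun_integrand_scaled) auto
  have taylor: "\<bar>g t - c * t * (1 - t) * x^2 / 4\<bar> \<le> 2 * c * x^4" if "t \<in> {0..1}" for t
  proof -
    have "g t - c * t * (1 - t) * x^2 / 4
        = - (c/4) * ((1 + x) powr t + (1 - x) powr t - 2 - t * (t - 1) * x^2)"
      by (simp add: g_eq field_simps)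
    then have "\<bar>g t - c * t * (1 - t) * x^2 / 4\<bar>
        = (c/4) * \<bar>(1 + x) powr t + (1 - x) powr t - 2 - t * (t - 1) * x^2\<bar>"
      using c by (simp add: abs_mult)
    also have "\<dots> \<le> (c/4) * (8 * x^4)"
      using c that x by (intro mult_left_mono powr_one_plus_minus_taylor) auto
    finally show ?thesis
      by simp
  qed
  have upper: "g t \<le> c * x^2 / 16 + 2 * c * x^4" if "t \<in> {0..1}" for t
  proof -
    have "c * x^2 / 4 * (t * (1 - t)) \<le> c * x^2 / 4 * (1/4)"
      using c mult_one_minus_le_quarter[of t] by (intro mult_left_mono) auto
    then have "c * t * (1 - t) * x^2 / 4 \<le> c * x^2 / 16"
      by (simp add: algebra_simps)
    then show ?thesis
      using taylor[OF that, unfolded abs_le_iff] by linarith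
  qed
  have lower: "c * x^2 / 16 - 2 * c * x^4 \<le> g (1/2)"
    using taylor[of "1/2"] by (simp add: abs_le_iff algebra_simps)
  have J_eq: "Jfun c l = (SUP t\<in>{0..1}. g t)"
    unfolding Jfun_def g_def ..
  have "bdd_above (g ` {0..1})"
    using upper by (intro bdd_aboveI2)
  then have "g (1/2) \<le> Jfun c l"
    unfolding J_eq by (intro cSUP_upper) auto
  moreover have "Jfun c l \<le> c * x^2 / 16 + 2 * c * x^4"
    unfolding J_eq using upper by (intro cSUP_least) auto
  moreover have "c * x^2 / 16 = l^2 / (16 * c)" "c * x^4 = l^4 / c^3"
    using c by (simp_all add: x_def power2_eq_square field_simps eval_nat_numeral)
  ultimately show ?thesis
    using lower by (simp add: abs_le_iff)
qed

lemma Ifun_quadratic_approx: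
  fixes c l :: real
  assumes c: "c > 0" and l: "\<bar>l\<bar> \<le> c/2"
  shows "\<bar>Ifun c l / 4 - l^2 / (16 * c)\<bar> \<le> l^4 / c^3"
proof -
  define x where "x = l / c"
  have x: "\<bar>x\<bar> \<le> 1/2"
    using c l by (simp add: x_def abs_divide field_simps)
  have ratios: "(c + l) / c = 1 + x" "(c - l) / c = 1 - x"
    and sums: "c + l = c * (1 + x)" "c - l = c * (1 - x)"
    using c by (auto simp: x_def field_simps)
  have "Ifun c l = (1/4) * (c * (1 + x) * ln (1 + x) + c * (1 - x) * ln (1 - x))"
    unfolding Ifun_def ratios unfolding sums ..
  moreover have "l^2 / (16 * c) = (c/16) * x^2"
    using c by (simp add: x_def power2_eq_square)
  ultimately have Ifun_eq: "Ifun c l / 4 - l^2 / (16 * c) = (c/16) * ((1 + x) * ln (1 + x) + (1 - x) * ln (1 - x) - x^2)"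
    by (simp add: algebra_simps)
  have "\<bar>Ifun c l / 4 - l^2 / (16 * c)\<bar> = (c/16) * \<bar>(1 + x) * ln (1 + x) + (1 - x) * ln (1 - x) - x^2\<bar>"
    unfolding Ifun_eq using c by (simp add: abs_mult)
  also have "\<dots> \<le> (c/16) * (2 * x^4)"
    using c by (intro mult_left_mono xlnx_one_plus_minus_taylor x) auto
  also have "\<dots> \<le> l^4 / c^3"
  proof -
    have "0 \<le> l^4"
      by simp
    then show ?thesis
      using c by (simp add: x_def field_simps eval_nat_numeral)
  qed
  finally show ?thesis .
qed

definition am_gm_gap :: "real \<Rightarrow> real \<Rightarrow> real \<Rightarrow> real" where
  "am_gm_gap u v t = (1 - t) * u + t * v - u powr (1 - t) * v powr t"

lemma am_gm_gap_nonneg: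
  assumes "0 < u" "0 < v" "0 \<le> t" "t \<le> 1"
  shows "0 \<le> am_gm_gap u v t"
  using Youngs_inequality_0[of "1 - t" t u v] assms by (simp add: am_gm_gap_def)

lemma am_gm_gap_le_bound:
  assumes "0 \<le> u" "0 \<le> v" "u \<le> b" "v \<le> b" "0 \<le> t" "t \<le> 1"
  shows "am_gm_gap u v t \<le> b"
  using convex_bound_le[of u b v "1 - t" t] assms
    mult_nonneg_nonneg[OF powr_ge_zero[of u "1 - t"] powr_ge_zero[of v t]]
  unfolding am_gm_gap_def by linarith

lemma am_gm_gap_divide:
  assumes "0 < k" "0 \<le> u" "0 \<le> v"
  shows "am_gm_gap (u / k) (v / k) t = am_gm_gap u v t / k"
proof -
  have "(u / k) powr (1 - t) * (v / k) powr t = u powr (1 - t) * v powr t / (k powr (1 - t) * k powr t)"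
    using assms by (simp add: powr_divide)
  also have "k powr (1 - t) * k powr t = k"
    using assms by (simp flip: powr_add)
  finally show ?thesis
    by (simp add: am_gm_gap_def diff_divide_distrib add_divide_distrib)
qed

text \<open>The weighted geometric mean dominates the weighted harmonic mean, and the arithmetic
  minus the harmonic mean is exactly the right-hand side.\<close>
lemma am_gm_gap_le_harmonic:
  assumes u: "0 < u" and v: "0 < v" and t: "0 \<le> t" "t \<le> 1"
  shows "am_gm_gap u v t \<le> t * (1 - t) * (u - v)^2 / ((1 - t) * v + t * u)"
proof -
  define w where "w = (1 - t) * v + t * u"
  have w: "0 < w"
    using u v t by (cases "t = 0") (auto simp: w_def intro: add_pos_nonneg add_nonneg_pos)
  have "1 / (u powr (1 - t) * v powr t) = (1 / u) powr (1 - t) * (1 / v) powr t"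
    using u v by (simp add: powr_divide)
  also have "\<dots> \<le> (1 - t) * (1 / u) + t * (1 / v)"
    using Youngs_inequality_0[of "1 - t" t "1 / u" "1 / v"] u v t by simp
  also have "\<dots> = w / (u * v)"
    using u v by (simp add: w_def field_simps)
  finally have "u * v / w \<le> u powr (1 - t) * v powr t"
    using u v w by (simp add: field_simps)
  moreover have "(1 - t) * u + t * v - u * v / w = t * (1 - t) * (u - v)^2 / w"
    using w by (simp add: w_def field_simps power2_eq_square)
  ultimately show ?thesis
    by (simp add: am_gm_gap_def w_def)
qed

lemma am_gm_gap_le_square:
  assumes "1/2 \<le> u" "1/2 \<le> v" "0 \<le> t" "t \<le> 1"
  shows "am_gm_gap u v t \<le> (u - v)^2 / 2"
proof -
  have "(1 - t) * (1/2) + t * (1/2) \<le> (1 - t) * v + t * u"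
    using assms by (intro add_mono mult_left_mono) auto
  then have mean_ge: "1/2 \<le> (1 - t) * v + t * u"
    by (simp add: field_simps)
  have "am_gm_gap u v t \<le> t * (1 - t) * (u - v)^2 / ((1 - t) * v + t * u)"
    using assms by (intro am_gm_gap_le_harmonic) auto
  also have "\<dots> \<le> (1/4) * (u - v)^2 / (1/2)"
    using mean_ge mult_one_minus_le_quarter[of t]
    by (intro frac_le mult_right_mono) auto
  finally show ?thesis
    by simp
qed

definition bernoulli_chernoff_coeff :: "real \<Rightarrow> real \<Rightarrow> real \<Rightarrow> real" where
  "bernoulli_chernoff_coeff p q t = p powr (1 - t) * q powr t + (1 - p) powr (1 - t) * (1 - q) powr t"

lemma one_minus_bernoulli_chernoff_coeff:
  "1 - bernoulli_chernoff_coeff p q t = am_gm_gap p q t + am_gm_gap (1 - p) (1 - q) t"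
  by (simp add: bernoulli_chernoff_coeff_def am_gm_gap_def algebra_simps)

text \<open>For rare edges only the gap of the edge probabilities counts; the gap of the
  non-edge probabilities and the curvature of the logarithm are of second order.\<close>
lemma ln_bernoulli_chernoff_coeff_approx:
  assumes p: "0 < p" and q: "0 < q" and pq: "p + q \<le> 1/4" and t: "0 \<le> t" "t \<le> 1"
  shows "0 < bernoulli_chernoff_coeff p q t"
    and "\<bar>- ln (bernoulli_chernoff_coeff p q t) - am_gm_gap p q t\<bar> \<le> 9 * (p + q)^2"
proof -
  define s where "s = p + q"
  define D where "D = am_gm_gap p q t"
  define R where "R = am_gm_gap (1 - p) (1 - q) t"
  have D: "0 \<le> D" "D \<le> s"
    using am_gm_gap_nonneg[OF p q t] am_gm_gap_le_bound[of p q s t] p q t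
    by (auto simp: D_def s_def)
  have "(1 - p - (1 - q))^2 \<le> s^2"
    unfolding abs_le_square_iff[symmetric] using p q by (simp add: s_def abs_le_iff)
  then have R: "0 \<le> R" "R \<le> s^2 / 2"
    using am_gm_gap_nonneg[of "1 - p" "1 - q" t] am_gm_gap_le_square[of "1 - p" "1 - q" t] p q pq t
    by (auto simp: R_def)
  have "s^2 \<le> s"
    using p q pq by (simp add: s_def power2_eq_square mult_le_cancel_left1)
  then have DR: "0 \<le> D + R" "D + R \<le> 2 * s" "D + R \<le> 1/2"
    using D R pq by (auto simp: s_def)
  have coeff: "bernoulli_chernoff_coeff p q t = 1 - (D + R)"
    using one_minus_bernoulli_chernoff_coeff[of p q t] by (simp add: D_def R_def)
  then show "0 < bernoulli_chernoff_coeff p q t"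
    using DR by simp
  have "- (D + R) - 2 * (D + R)^2 \<le> ln (1 - (D + R))" "ln (1 - (D + R)) \<le> - (D + R)"
    using ln_one_minus_pos_lower_bound[of "D + R"] ln_one_minus_pos_upper_bound[of "D + R"] DR
    by auto
  moreover have "(D + R)^2 \<le> (2 * s)^2"
    using DR by (intro power_mono) auto
  ultimately show "\<bar>- ln (bernoulli_chernoff_coeff p q t) - am_gm_gap p q t\<bar> \<le> 9 * (p + q)^2"
    unfolding coeff D_def[symmetric] s_def[symmetric] using R by (simp add: abs_le_iff)
qed

lemma finite_vpairs: "finite (vpairs n)"
  by (rule finite_subset[of _ "{1..n} \<times> {1..n}"]) (auto simp: vpairs_def)

lemma card_vpairs: "real (card (vpairs n)) = real n * (real n - 1) / 2"
proof (induction n)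
  case 0
  have "vpairs 0 = {}"
    by (auto simp: vpairs_def)
  then show ?case
    by simp
next
  case (Suc n)
  have "vpairs (Suc n) = vpairs n \<union> (\<lambda>i. (i, Suc n)) ` {1..n}"
    "vpairs n \<inter> (\<lambda>i. (i, Suc n)) ` {1..n} = {}"
    by (auto simp: vpairs_def)
  then have "card (vpairs (Suc n)) = card (vpairs n) + card ((\<lambda>i. (i, Suc n)) ` {1..n})"
    by (simp add: card_Un_disjoint finite_vpairs)
  also have "card ((\<lambda>i. (i, Suc n)) ` {1..n}) = n"
    by (simp add: card_image inj_on_def)
  finally show ?case
    using Suc.IH by (simp add: field_simps)
qed

lemma vpairs_between_blocks:
  "vpairs (2 * m) \<inter> {e. \<not> same_block (2 * m) (fst e) (snd e)} = {1..m} \<times> {m + 1..2 * m}"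
  by (auto simp: vpairs_def same_block_def)

lemma card_vpairs_within_blocks:
  "real (card (vpairs (2 * m) \<inter> {e. same_block (2 * m) (fst e) (snd e)})) = real m * real m - real m"
proof -
  have "card (vpairs (2 * m)) = card (vpairs (2 * m) \<inter> {e. same_block (2 * m) (fst e) (snd e)})
      + card (vpairs (2 * m) \<inter> {e. \<not> same_block (2 * m) (fst e) (snd e)})"
    by (subst card_Un_disjoint[symmetric]) (auto simp: finite_vpairs intro: arg_cong[where f = card])
  also have "card (vpairs (2 * m) \<inter> {e. \<not> same_block (2 * m) (fst e) (snd e)}) = m * m"
    unfolding vpairs_between_blocks by simp
  finally show ?thesis
    using card_vpairs[of "2 * m"] by (simp add: field_simps)
qed

definition block_rate :: "real \<Rightarrow> real \<Rightarrow> nat \<Rightarrow> nat \<times> nat \<Rightarrow> real" where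
  "block_rate c lam n e = (if same_block n (fst e) (snd e) then c + lam else c - lam)"

lemma sum_vpairs_block_rate:
  "(\<Sum>e\<in>vpairs (2 * m). f (block_rate c lam (2 * m) e))
    = (real m * real m - real m) * f (c + lam) + real m * real m * f (c - lam)"
proof -
  have "(\<Sum>e\<in>vpairs (2 * m). f (block_rate c lam (2 * m) e))
      = real (card (vpairs (2 * m) \<inter> {e. same_block (2 * m) (fst e) (snd e)})) * f (c + lam)
      + real (card (vpairs (2 * m) \<inter> - {e. same_block (2 * m) (fst e) (snd e)})) * f (c - lam)"
    unfolding block_rate_def if_distrib[of f] by (simp add: sum.If_cases finite_vpairs)
  also have "vpairs (2 * m) \<inter> - {e. same_block (2 * m) (fst e) (snd e)} = {1..m} \<times> {m + 1..2 * m}"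
    using vpairs_between_blocks[of m] by auto
  finally show ?thesis
    by (simp add: card_vpairs_within_blocks)
qed

lemma sum_Pow_prod_if:
  fixes f g :: "'a \<Rightarrow> 'b::comm_semiring_1"
  assumes "finite V"
  shows "(\<Sum>A\<in>Pow V. \<Prod>e\<in>V. if e \<in> A then f e else g e) = (\<Prod>e\<in>V. f e + g e)"
proof -
  have "(\<Prod>e\<in>V. if e \<in> A then f e else g e) = prod f A * prod g (V - A)" if "A \<in> Pow V" for A
  proof -
    have "V \<inter> {e. e \<in> A} = A" "V \<inter> - {e. e \<in> A} = V - A"
      using that by auto
    then show ?thesis
      using prod.If_cases[OF assms, of "\<lambda>e. e \<in> A" f g] by simp
  qed
  then show ?thesis
    by (simp add: prod_add[OF assms])
qed

lemma chernoff_sum_eq_prod: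
  "(\<Sum>A\<in>Pow (vpairs n). P0 c n A powr (1 - t) * P1 c lam n A powr t)
    = (\<Prod>e\<in>vpairs n. bernoulli_chernoff_coeff (c / real n) (block_rate c lam n e / real n) t)"
proof -
  have "P0 c n A powr (1 - t) * P1 c lam n A powr t =
     (\<Prod>e\<in>vpairs n. if e \<in> A then (c / real n) powr (1 - t) * (block_rate c lam n e / real n) powr t
        else (1 - c / real n) powr (1 - t) * (1 - block_rate c lam n e / real n) powr t)" for A
    unfolding P0_def P1_def prod_powr_distrib prod.distrib[symmetric]
    by (rule prod.cong) (auto simp: Let_def block_rate_def)
  then show ?thesis
    by (simp add: sum_Pow_prod_if finite_vpairs bernoulli_chernoff_coeff_def)
qed

lemma Jfun_integrand_eq_am_gm_gap:
  "(1/4) * (2 * c - c powr (1 - t) * ((c + lam) powr t + (c - lam) powr t))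
    = (am_gm_gap c (c + lam) t + am_gm_gap c (c - lam) t) / 4"
  by (simp add: am_gm_gap_def algebra_simps)

text \<open>Each of the \<open>m^2 - m\<close> within-block and \<open>m^2\<close> between-block pairs contributes
  \<open>am_gm_gap c a t / n\<close> up to \<open>O(1/n^2)\<close>; the deficit of \<open>m\<close> within-block pairs against
  \<open>m^2\<close> costs at most \<open>c\<close>.\<close>
lemma ln_chernoff_sum_approx:
  fixes c lam t :: real and m :: nat
  assumes c: "c > 0" and lam: "\<bar>lam\<bar> < c" and n: "real (2 * m) \<ge> 12 * c"
    and t: "0 \<le> t" "t \<le> 1"
  shows "\<bar>- ln (\<Sum>A\<in>Pow (vpairs (2 * m)). P0 c (2 * m) A powr (1 - t) * P1 c lam (2 * m) A powr t)
     - real (2 * m) * ((1/4) * (2 * c - c powr (1 - t) * ((c + lam) powr t + (c - lam) powr t)))\<bar>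
     \<le> 81 * c^2 / 2 + c"
proof -
  define n where "n = real (2 * m)"
  define a where "a = block_rate c lam (2 * m)"
  define h where "h e = bernoulli_chernoff_coeff (c / n) (a e / n) t" for e
  have n_pos: "0 < n"
    using c n by (simp add: n_def)
  have a: "0 < a e" "a e \<le> 2 * c" for e
    using lam by (auto simp: a_def block_rate_def)
  have pair: "0 < h e \<and> \<bar>- ln (h e) - am_gm_gap c (a e) t / n\<bar> \<le> 81 * c^2 / n^2" for e
  proof -
    have sum_le: "c / n + a e / n \<le> 3 * c / n"
      using a[of e] n_pos by (simp add: add_divide_distrib[symmetric] divide_right_mono)
    moreover have "3 * c / n \<le> 1/4"
      using n n_pos by (simp add: n_def field_simps)
    ultimately have "c / n + a e / n \<le> 1/4"
      by linarith
    then have "0 < h e \<and> \<bar>- ln (h e) - am_gm_gap c (a e) t / n\<bar> \<le> 9 * (c / n + a e / n)^2"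
      using ln_bernoulli_chernoff_coeff_approx[of "c / n" "a e / n" t] a[of e] c n_pos t
      by (simp add: h_def am_gm_gap_divide)
    moreover have "(c / n + a e / n)^2 \<le> (3 * c / n)^2"
      using sum_le a[of e] c n_pos by (intro power_mono) auto
    ultimately show ?thesis
      by (simp add: power_divide power_mult_distrib)
  qed
  have "ln (\<Prod>e\<in>vpairs (2 * m). h e) = (\<Sum>e\<in>vpairs (2 * m). ln (h e))"
    using pair by (intro ln_prod finite_vpairs) (metis less_irrefl)
  then have "- ln (\<Prod>e\<in>vpairs (2 * m). h e) = (\<Sum>e\<in>vpairs (2 * m). - ln (h e))"
    by (simp add: sum_negf)
  moreover have "(\<Sum>e\<in>vpairs (2 * m). am_gm_gap c (a e) t / n)
      = n * ((am_gm_gap c (c + lam) t + am_gm_gap c (c - lam) t) / 4) - am_gm_gap c (c + lam) t / 2"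
  proof -
    have "real m > 0"
      using n_pos by (simp add: n_def)
    then show ?thesis
      unfolding a_def sum_vpairs_block_rate[of "\<lambda>x. am_gm_gap c x t / n"]
      by (simp add: n_def field_simps)
  qed
  moreover have "\<bar>\<Sum>e\<in>vpairs (2 * m). - ln (h e) - am_gm_gap c (a e) t / n\<bar> \<le> 81 * c^2 / 2"
  proof -
    have "\<bar>\<Sum>e\<in>vpairs (2 * m). - ln (h e) - am_gm_gap c (a e) t / n\<bar>
        \<le> real (card (vpairs (2 * m))) * (81 * c^2 / n^2)"
      using pair by (intro order_trans[OF sum_abs] sum_bounded_above) auto
    also have "\<dots> = (n - 1) / n * (81 * c^2 / 2)"
      unfolding card_vpairs n_def[symmetric] using n_pos by (simp add: power2_eq_square field_simps)
    also have "\<dots> \<le> 81 * c^2 / 2"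
      using n_pos by (intro mult_left_le_one_le) (auto simp: n_def)
    finally show ?thesis .
  qed
  moreover have "0 \<le> am_gm_gap c (c + lam) t" "am_gm_gap c (c + lam) t \<le> 2 * c"
  proof -
    have "0 < c + lam" "c + lam \<le> 2 * c"
      using lam by auto
    then show "0 \<le> am_gm_gap c (c + lam) t" "am_gm_gap c (c + lam) t \<le> 2 * c"
      using am_gm_gap_nonneg[OF c _ t] am_gm_gap_le_bound[of c "c + lam" "2 * c" t] c t
      by auto
  qed
  moreover have "(\<Sum>A\<in>Pow (vpairs (2 * m)). P0 c (2 * m) A powr (1 - t) * P1 c lam (2 * m) A powr t)
      = (\<Prod>e\<in>vpairs (2 * m). h e)"
    by (simp add: chernoff_sum_eq_prod h_def a_def n_def)
  ultimately show ?thesis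
    unfolding Jfun_integrand_eq_am_gm_gap n_def[symmetric] sum_subtractf abs_le_iff
    by (simp only:) (intro conjI; linarith)
qed

lemma SUP_approx_scaled:
  fixes F G :: "real \<Rightarrow> real" and S :: "real set"
  assumes S: "S \<noteq> {}" and k: "k > 0" and approx: "\<And>t. t \<in> S \<Longrightarrow> \<bar>F t - k * G t\<bar> \<le> e"
    and bdd: "\<And>t. t \<in> S \<Longrightarrow> G t \<le> B"
  shows "\<bar>(SUP t\<in>S. F t) - k * (SUP t\<in>S. G t)\<bar> \<le> e"
proof -
  have bdd_G: "bdd_above (G ` S)"
    using bdd by (intro bdd_aboveI2) auto
  have "F t \<le> k * B + e" if "t \<in> S" for t
    using approx[OF that, unfolded abs_le_iff] mult_left_mono[OF bdd[OF that], of k] k by linarith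
  then have bdd_F: "bdd_above (F ` S)"
    by (intro bdd_aboveI2)
  have "F t \<le> k * (SUP t\<in>S. G t) + e" if "t \<in> S" for t
    using approx[OF that, unfolded abs_le_iff] mult_left_mono[OF cSUP_upper[OF that bdd_G], of k] k
    by linarith
  then have upper: "(SUP t\<in>S. F t) \<le> k * (SUP t\<in>S. G t) + e"
    using S by (intro cSUP_least)
  have "G t \<le> ((SUP t\<in>S. F t) + e) / k" if "t \<in> S" for t
    using approx[OF that] cSUP_upper[OF that bdd_F] k by (simp add: abs_le_iff field_simps)
  then have "(SUP t\<in>S. G t) \<le> ((SUP t\<in>S. F t) + e) / k"
    using S by (intro cSUP_least)
  then show ?thesis
    using upper k by (simp add: abs_le_iff field_simps)
qed

lemma chernoff_linear_approx:
  fixes c lam :: real and m :: nat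
  assumes c: "c > 0" and lam: "\<bar>lam\<bar> < c" and n: "real (2 * m) \<ge> 12 * c"
  shows "\<bar>chernoff c lam (2 * m) - Jfun c lam * real (2 * m)\<bar> \<le> 81 * c^2 / 2 + c"
proof -
  have "\<bar>chernoff c lam (2 * m) - real (2 * m) * Jfun c lam\<bar> \<le> 81 * c^2 / 2 + c"
    unfolding chernoff_def Jfun_def
  proof (rule SUP_approx_scaled[where B = "c/2"])
    show "real (2 * m) > 0"
      using c n by linarith
  next
    fix t :: real assume "t \<in> {0..1}"
    then show "\<bar>- ln (\<Sum>A\<in>Pow (vpairs (2 * m)). P0 c (2 * m) A powr (1 - t) * P1 c lam (2 * m) A powr t)
        - real (2 * m) * ((1/4) * (2 * c - c powr (1 - t) * ((c + lam) powr t + (c - lam) powr t)))\<bar>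
        \<le> 81 * c^2 / 2 + c"
      using ln_chernoff_sum_approx[OF c lam n] by auto
    have "0 \<le> c powr (1 - t) * ((c + lam) powr t + (c - lam) powr t)"
      by simp
    then show "(1/4) * (2 * c - c powr (1 - t) * ((c + lam) powr t + (c - lam) powr t)) \<le> c/2"
      by simp
  qed auto
  then show ?thesis
    by (simp add: mult.commute)
qed

lemma bounded_error_imp_smallo_tendsto:
  fixes f g :: "'a \<Rightarrow> real"
  assumes g: "filterlim g at_top F" and bound: "\<forall>\<^sub>F x in F. \<bar>f x - J * g x\<bar> \<le> B"
  shows "(\<lambda>x. f x - J * g x) \<in> o[F](g)" and "((\<lambda>x. f x / g x) \<longlongrightarrow> J) F"
proof -
  have g_pos: "\<forall>\<^sub>F x in F. 0 < g x"
    using g by (simp add: filterlim_at_top_dense)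
  have "(\<lambda>x. f x - J * g x) \<in> O[F](\<lambda>_. 1)"
    using bound by (intro bigoI[of _ B]) (auto elim!: eventually_mono)
  moreover have "(\<lambda>_. 1) \<in> o[F](g)"
    using tendsto_inverse_0_at_top[OF g] g_pos
    by (intro smalloI_tendsto) (auto simp: inverse_eq_divide elim!: eventually_mono)
  ultimately show small: "(\<lambda>x. f x - J * g x) \<in> o[F](g)"
    by (rule landau_o.big_small_trans)
  have "((\<lambda>x. (f x - J * g x) / g x + J) \<longlongrightarrow> J) F"
    using tendsto_add[OF smalloD_tendsto[OF small] tendsto_const] by simp
  moreover have "\<forall>\<^sub>F x in F. (f x - J * g x) / g x + J = f x / g x"
    using g_pos by eventually_elim (simp add: field_simps)
  ultimately show "((\<lambda>x. f x / g x) \<longlongrightarrow> J) F"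
    by (rule Lim_transform_eventually)
qed

theorem lemma4p2:
  fixes c lam :: real
  assumes "c > 0" and "\<bar>lam\<bar> < c"
  shows "(\<lambda>m::nat. chernoff c lam (2 * m) / real (2 * m)) \<longlonglongrightarrow> Jfun c lam
    \<and> (\<lambda>l. Jfun c l - l ^ 2 / (16 * c)) \<in> O[at 0](\<lambda>l. l ^ 4 / c ^ 3)
    \<and> (\<lambda>m::nat. chernoff c lam (2 * m) - Jfun c lam * real (2 * m)) \<in> o(\<lambda>m. real (2 * m))
    \<and> (\<lambda>l. Jfun c l - Ifun c l / 4) \<in> O[at 0](\<lambda>l. l ^ 4 / c ^ 3)"
proof -
  note c = assms(1) and lam = assms(2)
  have "\<bar>chernoff c lam (2 * m) - Jfun c lam * real (2 * m)\<bar> \<le> 81 * c^2 / 2 + c"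
    if "nat \<lceil>6 * c\<rceil> \<le> m" for m
    using that by (intro chernoff_linear_approx[OF c lam]) linarith
  then have bound: "\<forall>\<^sub>F m in sequentially.
      \<bar>chernoff c lam (2 * m) - Jfun c lam * real (2 * m)\<bar> \<le> 81 * c^2 / 2 + c"
    by (rule eventually_sequentiallyI)
  have unbounded: "filterlim (\<lambda>m. real (2 * m)) at_top sequentially"
    using filterlim_compose[OF filterlim_real_sequentially mult_nat_left_at_top[of 2]] by simp
  have small: "(\<lambda>m. chernoff c lam (2 * m) - Jfun c lam * real (2 * m)) \<in> o(\<lambda>m. real (2 * m))"
    using unbounded bound by (rule bounded_error_imp_smallo_tendsto(1))
  have limit: "(\<lambda>m. chernoff c lam (2 * m) / real (2 * m)) \<longlonglongrightarrow> Jfun c lam"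
    using unbounded bound by (rule bounded_error_imp_smallo_tendsto(2))
  have near_0: "\<forall>\<^sub>F l in at 0. \<bar>l\<bar> \<le> c / 2"
    unfolding eventually_at using c by (intro exI[of _ "c / 2"]) (auto simp: dist_real_def)
  have J: "(\<lambda>l. Jfun c l - l^2 / (16 * c)) \<in> O[at 0](\<lambda>l. l^4 / c^3)"
    using near_0 Jfun_quadratic_approx[OF c] by (intro bigoI[of _ 2]) (auto elim!: eventually_mono)
  have "(\<lambda>l. Ifun c l / 4 - l^2 / (16 * c)) \<in> O[at 0](\<lambda>l. l^4 / c^3)"
    using near_0 Ifun_quadratic_approx[OF c] by (intro bigoI[of _ 1]) (auto elim!: eventually_mono)
  from sum_in_bigo(2)[OF J this] have "(\<lambda>l. Jfun c l - Ifun c l / 4) \<in> O[at 0](\<lambda>l. l^4 / c^3)"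
    by simp
  with limit J small show ?thesis
    by blast
qed

end
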